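(* Let $P,C$ be causal stable systems on $\mathcal{L}_{2e+}^n$ such that $P\#C$ is well-posed and the single-loop feedback system $P\#C|_{e_2=0}$ is stable, and assume $\theta(P)+\theta(C)\le\pi$. Let $G:e_1\mapsto y_1$ be the closed-loop map of $P\#C|_{e_2=0}$. Then $$\theta(G)\le\max\{\theta(P),\theta(C)\}.$$
   Context: For $n\ge1$, $\mathcal{L}_2^n$ is the set of measurable $u:\mathbb{R}\to\mathbb{R}^n$ with $\|u\|_2^2=\int|u(t)|^2dt<\infty$, inner product $\langle u,v\rangle=\int u(t)^Tv(t)\,dt$; $\mathcal{L}_{2+}=\{u\in\mathcal{L}_2:u(t)=0\ \text{for}\ t<0\}$. For $T\ge0$, $(\Gamma_Tu)(t)=u(t)$ for $t\le T$, $0$ for $t>T$; $\mathcal{L}_{2e+}=\{u:\Gamma_Tu\in\mathcal{L}_{2+}\ \forall T\ge0\}$. A system is an operator $P:\mathcal{L}_{2e+}\to\mathcal{L}_{2e+}$ with $P0=0$, $P\ne0$; causal if $\Gamma_TP=\Gamma_TP\Gamma_T$ for all $T\ge 0$; a causal system is stable if $Pu\in\mathcal{L}_{2+}$ for all $u\in\mathcal{L}_{2+}$ and $\sup_{0\ne u\in\mathcal{L}_{2+}}\|Pu\|_2/\|u\|_2<\infty$. The singular angle $\theta(P)\in[0,\pi]$ is given by $\cos\theta(P)=\inf\{\langle u,Pu\rangle/(\|u\|_2\|Pu\|_2):0\neq u\in\mathcal{L}_{2+},\ Pu\ne0\}$. The feedback system $P\#C$: $u_1=e_1-y_2$, $u_2=e_2+y_1$,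 $y_1=Pu_1$, $y_2=Cu_2$; well-posed if $(u_1,u_2)\mapsto(u_1+Cu_2,\ u_2-Pu_1)$ has a causal inverse on $\mathcal{L}_{2e+}\times\mathcal{L}_{2e+}$. $P\#C|_{e_2=0}$ is the loop with $e_2=0$; it is stable if there is $c>0$ with $\|\Gamma_T(u_1,u_2)\|_2\le c\|\Gamma_Te\|_2$ for all $T\ge0$ and all $e=(e_1,0)$, $e_1\in\mathcal{L}_{2e+}$. *)

theory Defs
  imports "HOL-Analysis.Analysis"
begin

type_synonym 'n signal = "real \<Rightarrow> real ^ 'n"
type_synonym 'n sys = "'n signal \<Rightarrow> 'n signal"

definition L2 :: "'n::finite signal set" where
  "L2 = {u. u \<in> borel_measurable lborel \<and> integrable lborel (\<lambda>t. (norm (u t))\<^sup>2)}"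

definition l2norm :: "'n::finite signal \<Rightarrow> real" where
  "l2norm u = sqrt (LINT t|lborel. (norm (u t))\<^sup>2)"

definition l2inner :: "'n::finite signal \<Rightarrow> 'n signal \<Rightarrow> real" where
  "l2inner u v = (LINT t|lborel. u t \<bullet> v t)"

definition L2p :: "'n::finite signal set" where
  "L2p = {u \<in> L2. \<forall>t<0. u t = 0}"

definition trunc :: "real \<Rightarrow> 'n::finite signal \<Rightarrow> 'n signal" where
  "trunc T u = (\<lambda>t. if t \<le> T then u t else 0)"

definition L2ep :: "'n::finite signal set" where
  "L2ep = {u. \<forall>T\<ge>0. trunc T u \<in> L2p}"

definition is_system :: "'n::finite sys \<Rightarrow> bool" where
  "is_system P \<longleftrightarrow> (\<forall>u\<in>L2ep. P u \<in> L2ep) \<and> P (\<lambda>t. 0) = (\<lambda>t. 0)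
     \<and> (\<exists>u\<in>L2ep. P u \<noteq> (\<lambda>t. 0))"

definition causal :: "'n::finite sys \<Rightarrow> bool" where
  "causal P \<longleftrightarrow> (\<forall>T\<ge>0. \<forall>u\<in>L2ep. trunc T (P u) = trunc T (P (trunc T u)))"

text \<open>Nonzero elements of L2 are those of nonzero L2 norm (L2 as equivalence classes).\<close>
definition stable :: "'n::finite sys \<Rightarrow> bool" where
  "stable P \<longleftrightarrow> causal P \<and> (\<forall>u\<in>L2p. P u \<in> L2p) \<and>
     bdd_above ((\<lambda>u. l2norm (P u) / l2norm u) ` {u \<in> L2p. l2norm u \<noteq> 0})"

definition singular_angle :: "'n::finite sys \<Rightarrow> real" where
  "singular_angle P = arccos (Inf {l2inner u (P u) / (l2norm u * l2norm (P u)) | u.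
       u \<in> L2p \<and> l2norm u \<noteq> 0 \<and> l2norm (P u) \<noteq> 0})"

definition fb_map :: "'n::finite sys \<Rightarrow> 'n sys \<Rightarrow> 'n signal \<times> 'n signal \<Rightarrow> 'n signal \<times> 'n signal" where
  "fb_map P C = (\<lambda>(u1, u2). (\<lambda>t. u1 t + C u2 t, \<lambda>t. u2 t - P u1 t))"

definition well_posed :: "'n::finite sys \<Rightarrow> 'n sys \<Rightarrow> bool" where
  "well_posed P C \<longleftrightarrow> (\<exists>H. (\<forall>e \<in> L2ep \<times> L2ep. H e \<in> L2ep \<times> L2ep \<and> fb_map P C (H e) = e)
      \<and> (\<forall>u \<in> L2ep \<times> L2ep. H (fb_map P C u) = u)
      \<and> (\<forall>T\<ge>0. \<forall>e \<in> L2ep \<times> L2ep.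
            map_prod (trunc T) (trunc T) (H e)
          = map_prod (trunc T) (trunc T) (H (map_prod (trunc T) (trunc T) e))))"

text \<open>The (unique, under well-posedness) solution (u1,u2) of the loop with e2 = 0.\<close>
definition loop_sol :: "'n::finite sys \<Rightarrow> 'n sys \<Rightarrow> 'n signal \<Rightarrow> 'n signal \<times> 'n signal" where
  "loop_sol P C e1 = (THE p. p \<in> L2ep \<times> L2ep \<and> fb_map P C p = (e1, (\<lambda>t. 0)))"

definition loop_stable :: "'n::finite sys \<Rightarrow> 'n sys \<Rightarrow> bool" where
  "loop_stable P C \<longleftrightarrow> (\<exists>c>0. \<forall>T\<ge>0. \<forall>e1\<in>L2ep.
     sqrt ((l2norm (trunc T (fst (loop_sol P C e1))))\<^sup>2 + (l2norm (trunc T (snd (loop_sol P C e1))))\<^sup>2)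
       \<le> c * l2norm (trunc T e1))"

definition closed_loop :: "'n::finite sys \<Rightarrow> 'n sys \<Rightarrow> 'n sys" where
  "closed_loop P C e1 = P (fst (loop_sol P C e1))"

end

theory Submission
  imports Defs
begin

text \<open>
  Let e be a finite-energy input, (u, y) the solution of the loop, so that e = u + C y and
  G e = y = P u. The sector conditions defining the singular angles say that u lies within
  angle theta(P) of y and C y within angle theta(C) of y. If both angles are at most pi/2, the
  vectors within the larger angle of y form a convex cone, which therefore contains e = u + C y.
  If, say, theta(C) > pi/2, then theta(P) \<le> pi - theta(C), so u lies in the convex cone of
  angle pi - theta(C) around y; writing C y = e - u, the triangle inequality shows that e cannot
  lie in the open cone of that angle around -y, i.e. e lies within angle theta(C) of y.
\<close>

section \<open>Square-integrable signals\<close>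

lemma L2_add:
  assumes "u \<in> L2" "v \<in> L2"
  shows "(\<lambda>t. u t + v t) \<in> L2"
proof -
  have [measurable]: "u \<in> borel_measurable lborel" "v \<in> borel_measurable lborel"
    using assms by (auto simp: L2_def)
  have bound: "(norm (a + b))\<^sup>2 \<le> 2 * (norm a)\<^sup>2 + 2 * (norm b)\<^sup>2" for a b :: "real ^ 'a"
  proof -
    have "(norm (a + b))\<^sup>2 \<le> (norm a + norm b)\<^sup>2"
      by (simp add: norm_triangle_ineq power_mono)
    also have "\<dots> \<le> 2 * (norm a)\<^sup>2 + 2 * (norm b)\<^sup>2"
      using sum_squares_bound[of "norm a" "norm b"] by (simp add: power2_sum)
    finally show ?thesis .
  qed
  have "integrable lborel (\<lambda>t. (norm (u t + v t))\<^sup>2)"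
  proof (rule Bochner_Integration.integrable_bound)
    show "integrable lborel (\<lambda>t. 2 * (norm (u t))\<^sup>2 + 2 * (norm (v t))\<^sup>2)"
      using assms by (auto simp: L2_def)
  qed (use bound in auto)
  then show ?thesis by (simp add: L2_def)
qed

lemma L2_scaleR:
  assumes "u \<in> L2"
  shows "(\<lambda>t. c *\<^sub>R u t) \<in> L2"
proof -
  have [measurable]: "u \<in> borel_measurable lborel"
    using assms by (simp add: L2_def)
  have "(\<lambda>t. c *\<^sub>R u t) \<in> borel_measurable lborel" by measurable
  with assms show ?thesis by (simp add: L2_def power_mult_distrib)
qed

lemma integrable_inner_L2:
  assumes "u \<in> L2" "v \<in> L2"
  shows "integrable lborel (\<lambda>t. u t \<bullet> v t)"
proof -
  have [measurable]: "u \<in> borel_measurable lborel" "v \<in> borel_measurable lborel"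
    using assms by (auto simp: L2_def)
  have bound: "\<bar>a \<bullet> b\<bar> \<le> (norm a)\<^sup>2 + (norm b)\<^sup>2" for a b :: "real ^ 'a"
    using Cauchy_Schwarz_ineq2[of a b] sum_squares_bound[of "norm a" "norm b"]
      mult_nonneg_nonneg[OF norm_ge_zero norm_ge_zero, of a b] by linarith
  show ?thesis
  proof (rule Bochner_Integration.integrable_bound)
    show "integrable lborel (\<lambda>t. (norm (u t))\<^sup>2 + (norm (v t))\<^sup>2)"
      using assms by (auto simp: L2_def)
  qed (use bound in auto)
qed

lemma l2inner_commute: "l2inner u v = l2inner v u"
  by (simp add: l2inner_def inner_commute)

lemma l2inner_add_left:
  assumes "u \<in> L2" "v \<in> L2" "w \<in> L2"
  shows "l2inner (\<lambda>t. u t + v t) w = l2inner u w + l2inner v w"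
  using integrable_inner_L2[OF assms(1,3)] integrable_inner_L2[OF assms(2,3)]
  by (simp add: l2inner_def inner_add_left)

lemma l2inner_add_right:
  assumes "u \<in> L2" "v \<in> L2" "w \<in> L2"
  shows "l2inner w (\<lambda>t. u t + v t) = l2inner w u + l2inner w v"
  using l2inner_add_left[OF assms] by (simp add: l2inner_commute)

lemma l2inner_scaleR_left: "l2inner (\<lambda>t. c *\<^sub>R u t) w = c * l2inner u w"
  by (simp add: l2inner_def)

lemma l2norm_nonneg: "0 \<le> l2norm u"
  by (simp add: l2norm_def)

lemma l2norm_uminus: "l2norm (\<lambda>t. - u t) = l2norm u"
  by (simp add: l2norm_def)

lemma l2norm_scaleR: "l2norm (\<lambda>t. c *\<^sub>R u t) = \<bar>c\<bar> * l2norm u"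
  by (simp add: l2norm_def power_mult_distrib real_sqrt_mult)

lemma power2_l2norm: "u \<in> L2 \<Longrightarrow> (l2norm u)\<^sup>2 = l2inner u u"
  by (simp add: l2norm_def l2inner_def power2_norm_eq_inner integral_nonneg_AE)

lemma power2_l2norm_add:
  assumes "u \<in> L2" "v \<in> L2"
  shows "(l2norm (\<lambda>t. u t + v t))\<^sup>2 = (l2norm u)\<^sup>2 + 2 * l2inner u v + (l2norm v)\<^sup>2"
proof -
  have "(\<lambda>t. u t + v t) \<in> L2" by (rule L2_add[OF assms])
  then show ?thesis
    using assms
    by (simp add: power2_l2norm l2inner_add_left l2inner_add_right l2inner_commute[of v u])
qed

lemma nonneg_quadratic_discriminant:
  fixes a b c :: real
  assumes nonneg: "\<And>t. 0 \<le> a + 2 * t * b + t\<^sup>2 * c" and "0 \<le> c"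
  shows "b\<^sup>2 \<le> a * c"
proof (cases "c = 0")
  case True
  have "0 \<le> a + 2 * (- (a + 1) / (2 * b)) * b" if "b \<noteq> 0"
    using nonneg[of "- (a + 1) / (2 * b)"] True by simp
  then have "b = 0"
    by (cases "b = 0") (auto simp: field_simps)
  with True show ?thesis by simp
next
  case False
  with \<open>0 \<le> c\<close> have "0 < c" by simp
  have "0 \<le> a + 2 * (- b / c) * b + (- b / c)\<^sup>2 * c" by (rule nonneg)
  also have "\<dots> = a - b\<^sup>2 / c" using \<open>0 < c\<close> by (simp add: field_simps power2_eq_square)
  finally show ?thesis using \<open>0 < c\<close> by (simp add: field_simps)
qed

lemma l2inner_Cauchy_Schwarz:
  assumes "u \<in> L2" "v \<in> L2"
  shows "\<bar>l2inner u v\<bar> \<le> l2norm u * l2norm v"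
proof -
  have "0 \<le> (l2norm u)\<^sup>2 + 2 * t * l2inner u v + t\<^sup>2 * (l2norm v)\<^sup>2" for t
  proof -
    have "0 \<le> (l2norm (\<lambda>s. u s + t *\<^sub>R v s))\<^sup>2" by simp
    also have "\<dots> = (l2norm u)\<^sup>2 + 2 * t * l2inner u v + t\<^sup>2 * (l2norm v)\<^sup>2"
      using power2_l2norm_add[OF assms(1) L2_scaleR[OF assms(2)]]
        l2inner_scaleR_left[of t v u] l2inner_commute[of u "\<lambda>s. t *\<^sub>R v s"]
        l2inner_commute[of u v]
      by (simp add: l2norm_scaleR power_mult_distrib)
    finally show ?thesis .
  qed
  then have "(l2inner u v)\<^sup>2 \<le> (l2norm u)\<^sup>2 * (l2norm v)\<^sup>2"
    by (rule nonneg_quadratic_discriminant) simp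
  then have "\<bar>l2inner u v\<bar>\<^sup>2 \<le> (l2norm u * l2norm v)\<^sup>2"
    by (simp add: power_mult_distrib)
  then show ?thesis
    by (rule power2_le_imp_le) (simp add: l2norm_nonneg)
qed

lemma l2norm_triangle:
  assumes "u \<in> L2" "v \<in> L2"
  shows "l2norm (\<lambda>t. u t + v t) \<le> l2norm u + l2norm v"
proof -
  have "(l2norm (\<lambda>t. u t + v t))\<^sup>2 \<le> (l2norm u + l2norm v)\<^sup>2"
    using power2_l2norm_add[OF assms] l2inner_Cauchy_Schwarz[OF assms] by (simp add: power2_sum)
  then show ?thesis by (rule power2_le_imp_le) (simp add: l2norm_nonneg)
qed

lemma trunc_L2:
  assumes "u \<in> L2"
  shows "trunc T u \<in> L2"
proof -
  have [measurable]: "u \<in> borel_measurable lborel"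
    using assms by (simp add: L2_def)
  have "trunc T u \<in> borel_measurable lborel"
    unfolding trunc_def by measurable
  moreover have "integrable lborel (\<lambda>t. (norm (trunc T u t))\<^sup>2)"
  proof (rule Bochner_Integration.integrable_bound)
    show "integrable lborel (\<lambda>t. (norm (u t))\<^sup>2)"
      using assms by (simp add: L2_def)
  qed (use \<open>trunc T u \<in> borel_measurable lborel\<close> in \<open>auto simp: trunc_def\<close>)
  ultimately show ?thesis by (simp add: L2_def)
qed

lemma trunc_L2p: "u \<in> L2p \<Longrightarrow> trunc T u \<in> L2p"
  by (simp add: L2p_def trunc_L2) (simp add: trunc_def)

lemma L2p_imp_L2ep: "u \<in> L2p \<Longrightarrow> u \<in> L2ep"
  by (simp add: L2ep_def trunc_L2p)

lemma L2p_imp_L2: "u \<in> L2p \<Longrightarrow> u \<in> L2"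
  by (simp add: L2p_def)

lemma L2p_add: "u \<in> L2p \<Longrightarrow> v \<in> L2p \<Longrightarrow> (\<lambda>t. u t + v t) \<in> L2p"
  by (simp add: L2p_def L2_add)

lemma zero_L2ep: "(\<lambda>t. 0) \<in> L2ep"
  by (rule L2p_imp_L2ep) (simp add: L2p_def L2_def)

lemma l2norm_trunc_le:
  assumes "u \<in> L2"
  shows "l2norm (trunc T u) \<le> l2norm u"
  unfolding l2norm_def
proof (intro real_sqrt_le_mono integral_mono)
  show "integrable lborel (\<lambda>t. (norm (trunc T u t))\<^sup>2)"
    using trunc_L2[OF assms] by (simp add: L2_def)
  show "integrable lborel (\<lambda>t. (norm (u t))\<^sup>2)"
    using assms by (simp add: L2_def)
  show "(norm (trunc T u t))\<^sup>2 \<le> (norm (u t))\<^sup>2" for t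
    by (simp add: trunc_def)
qed

lemma eventually_trunc_eq: "\<forall>\<^sub>F i in sequentially. trunc (real i) u t = u t"
proof (rule eventually_sequentiallyI)
  fix i assume "nat \<lceil>t\<rceil> \<le> i"
  then show "trunc (real i) u t = u t" by (simp add: trunc_def)
qed

lemma L2ep_measurable:
  assumes "u \<in> L2ep"
  shows "u \<in> borel_measurable lborel"
proof (rule borel_measurable_LIMSEQ_metric)
  show "trunc (real i) u \<in> borel_measurable lborel" for i
    using assms by (simp add: L2ep_def L2p_def L2_def)
  show "(\<lambda>i. trunc (real i) u t) \<longlonglongrightarrow> u t" for t
    by (rule tendsto_eventually[OF eventually_trunc_eq])
qed

lemma L2p_if_bounded_truncations:
  assumes u: "u \<in> L2ep" and bound: "\<And>T. T \<ge> 0 \<Longrightarrow> l2norm (trunc T u) \<le> B"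
  shows "u \<in> L2p" and "l2norm u \<le> B"
proof -
  define f where "f i = (\<lambda>t. (norm (trunc (real i) u t))\<^sup>2)" for i
  have f_int: "integrable lborel (f i)" for i
  proof -
    have "trunc (real i) u \<in> L2" using u by (simp add: L2ep_def L2p_def)
    then show ?thesis by (simp add: f_def L2_def)
  qed
  have f_mono: "mono (\<lambda>i. f i t)" for t
    by (auto simp: mono_def f_def trunc_def)
  have f_lim: "(\<lambda>i. f i t) \<longlonglongrightarrow> (norm (u t))\<^sup>2" for t
    unfolding f_def
    by (rule tendsto_eventually) (use eventually_trunc_eq[of u t] in \<open>auto elim: eventually_mono\<close>)
  have "0 \<le> B"
    using bound[of 0] l2norm_nonneg[of "trunc 0 u"] by simp
  have f_int_le: "integral\<^sup>L lborel (f i) \<le> B\<^sup>2" for i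
  proof -
    have "integral\<^sup>L lborel (f i) = (l2norm (trunc (real i) u))\<^sup>2"
      by (simp add: f_def l2norm_def integral_nonneg_AE)
    also have "\<dots> \<le> B\<^sup>2"
      using bound[of "real i"] by (simp add: l2norm_nonneg power_mono)
    finally show ?thesis .
  qed
  have "incseq (\<lambda>i. integral\<^sup>L lborel (f i))"
    using f_mono f_int by (auto simp: incseq_def mono_def intro!: integral_mono)
  then obtain L where L: "(\<lambda>i. integral\<^sup>L lborel (f i)) \<longlonglongrightarrow> L"
    using incseq_convergent f_int_le by blast
  have [measurable]: "u \<in> borel_measurable lborel"
    using u by (rule L2ep_measurable)
  have "has_bochner_integral lborel (\<lambda>t. (norm (u t))\<^sup>2) L"
    by (rule has_bochner_integral_monotone_convergence[OF f_int AE_I2[OF f_mono] AE_I2[OF f_lim] L])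
      measurable
  then have "integrable lborel (\<lambda>t. (norm (u t))\<^sup>2)"
    and integral_eq: "integral\<^sup>L lborel (\<lambda>t. (norm (u t))\<^sup>2) = L"
    by (simp_all add: has_bochner_integral_iff)
  moreover have "u t = 0" if "t < 0" for t
  proof -
    have "trunc 0 u \<in> L2p" using u by (simp add: L2ep_def)
    with that have "trunc 0 u t = 0" by (simp add: L2p_def)
    with that show ?thesis by (simp add: trunc_def)
  qed
  ultimately show "u \<in> L2p"
    by (simp add: L2p_def L2_def)
  have "L \<le> B\<^sup>2"
    using L f_int_le by (meson LIMSEQ_le_const2)
  have "l2norm u = sqrt L"
    by (simp add: l2norm_def integral_eq)
  also have "\<dots> \<le> sqrt (B\<^sup>2)"
    using \<open>L \<le> B\<^sup>2\<close> by (rule real_sqrt_le_mono)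
  also have "\<dots> = B"
    using \<open>0 \<le> B\<close> by simp
  finally show "l2norm u \<le> B" .
qed

section \<open>Sums of signals in a sector around a fixed signal\<close>

lemma l2inner_add_ge_cone:
  assumes "u \<in> L2" "c \<in> L2" "y \<in> L2" "0 \<le> k"
    and u: "k * l2norm u * l2norm y \<le> l2inner u y"
    and c: "k * l2norm c * l2norm y \<le> l2inner c y"
  shows "k * l2norm (\<lambda>t. u t + c t) * l2norm y \<le> l2inner (\<lambda>t. u t + c t) y"
proof -
  have "k * l2norm (\<lambda>t. u t + c t) * l2norm y \<le> k * (l2norm u + l2norm c) * l2norm y"
    using assms l2norm_triangle[of u c]
    by (intro mult_right_mono mult_left_mono) (auto simp: l2norm_nonneg)
  also have "\<dots> \<le> l2inner (\<lambda>t. u t + c t) y"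
    using u c assms(1-3) by (simp add: l2inner_add_left algebra_simps)
  finally show ?thesis .
qed

lemma l2inner_add_ge_obtuse:
  assumes "u \<in> L2" "c \<in> L2" "y \<in> L2" "0 \<le> k"
    and u: "k * l2norm u * l2norm y \<le> l2inner u y"
    and c: "- k * l2norm c * l2norm y \<le> l2inner c y"
  shows "- k * l2norm (\<lambda>t. u t + c t) * l2norm y \<le> l2inner (\<lambda>t. u t + c t) y"
proof -
  have "l2norm c = l2norm (\<lambda>t. (u t + c t) + - u t)"
    by simp
  also have "\<dots> \<le> l2norm (\<lambda>t. u t + c t) + l2norm u"
    using l2norm_triangle[OF L2_add[OF assms(1,2)] L2_scaleR[OF assms(1), of "-1"]]
    by (simp add: l2norm_uminus)
  finally have "k * l2norm c * l2norm y \<le> k * (l2norm (\<lambda>t. u t + c t) + l2norm u) * l2norm y"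
    using assms by (intro mult_right_mono mult_left_mono) (auto simp: l2norm_nonneg)
  then show ?thesis
    using u c assms(1-3) by (simp add: l2inner_add_left algebra_simps)
qed

lemma l2inner_add_ge_sector_le:
  assumes "u \<in> L2" "c \<in> L2" "y \<in> L2"
    and "0 \<le> \<alpha>" "\<alpha> \<le> \<beta>" "\<alpha> + \<beta> \<le> pi"
    and u: "cos \<alpha> * l2norm u * l2norm y \<le> l2inner u y"
    and c: "cos \<beta> * l2norm c * l2norm y \<le> l2inner c y"
  shows "cos \<beta> * l2norm (\<lambda>t. u t + c t) * l2norm y \<le> l2inner (\<lambda>t. u t + c t) y"
proof -
  have u_weaker: "k * l2norm u * l2norm y \<le> l2inner u y" if "k \<le> cos \<alpha>" for k
  proof -
    have "k * (l2norm u * l2norm y) \<le> cos \<alpha> * (l2norm u * l2norm y)"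
      using that by (intro mult_right_mono) (simp_all add: l2norm_nonneg)
    with u show ?thesis by (simp add: mult.assoc)
  qed
  show ?thesis
  proof (cases "\<beta> \<le> pi / 2")
    case True
    have "0 \<le> cos \<beta>"
      using True assms by (intro cos_ge_zero) auto
    moreover have "cos \<beta> \<le> cos \<alpha>"
      using assms by (intro cos_monotone_0_pi_le) auto
    ultimately show ?thesis
      using assms u_weaker by (simp add: l2inner_add_ge_cone)
  next
    case False
    have "0 \<le> cos (pi - \<beta>)"
      using False assms by (intro cos_ge_zero) auto
    moreover have "cos (pi - \<beta>) \<le> cos \<alpha>"
      using assms by (intro cos_monotone_0_pi_le) auto
    ultimately have "0 \<le> - cos \<beta>" and "- cos \<beta> * l2norm u * l2norm y \<le> l2inner u y"
      using u_weaker[of "- cos \<beta>"] by simp_all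
    then show ?thesis
      using l2inner_add_ge_obtuse[of u c y "- cos \<beta>"] assms(1-3) c by simp
  qed
qed

lemma l2inner_add_ge_sector:
  assumes "u \<in> L2" "c \<in> L2" "y \<in> L2"
    and "0 \<le> \<alpha>" "0 \<le> \<beta>" "\<alpha> + \<beta> \<le> pi"
    and "cos \<alpha> * l2norm u * l2norm y \<le> l2inner u y"
    and "cos \<beta> * l2norm c * l2norm y \<le> l2inner c y"
  shows "cos (max \<alpha> \<beta>) * l2norm (\<lambda>t. u t + c t) * l2norm y \<le> l2inner (\<lambda>t. u t + c t) y"
proof (cases "\<alpha> \<le> \<beta>")
  case True
  then show ?thesis
    using l2inner_add_ge_sector_le[OF assms(1-4) True assms(6-8)] by (simp add: max_absorb2)
next
  case False
  have "(\<lambda>t. u t + c t) = (\<lambda>t. c t + u t)"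
    by (simp add: add.commute)
  with False show ?thesis
    using l2inner_add_ge_sector_le[OF assms(2,1,3,5) _ _ assms(8,7)] assms(6) by simp
qed

section \<open>Singular angles and sector conditions\<close>

text \<open>
  When this set is empty, singular_angle P = arccos (Inf {}) is unspecified; such systems satisfy
  every sector condition (lemma within_angle_degenerate) and are treated separately.
\<close>

definition angle_cosines :: "'n::finite sys \<Rightarrow> real set" where
  "angle_cosines P = {l2inner u (P u) / (l2norm u * l2norm (P u)) | u.
     u \<in> L2p \<and> l2norm u \<noteq> 0 \<and> l2norm (P u) \<noteq> 0}"

definition within_angle :: "real \<Rightarrow> 'n::finite sys \<Rightarrow> bool" where
  "within_angle \<alpha> P \<longleftrightarrow> (\<forall>u\<in>L2p. cos \<alpha> * l2norm u * l2norm (P u) \<le> l2inner u (P u))"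

lemma singular_angle_eq: "singular_angle P = arccos (Inf (angle_cosines P))"
  by (simp add: singular_angle_def angle_cosines_def)

lemma angle_cosines_eq_empty_iff:
  "angle_cosines P = {} \<longleftrightarrow> (\<forall>u\<in>L2p. l2norm u = 0 \<or> l2norm (P u) = 0)"
  by (auto simp: angle_cosines_def)

lemma abs_l2_cosine_le_one:
  assumes "u \<in> L2" "v \<in> L2"
  shows "\<bar>l2inner u v / (l2norm u * l2norm v)\<bar> \<le> 1"
proof (cases "l2norm u * l2norm v = 0")
  case True
  then show ?thesis by (simp only: div_by_0)
next
  case False
  then have "0 < l2norm u * l2norm v"
    by (simp add: l2norm_nonneg less_le)
  then show ?thesis
    using l2inner_Cauchy_Schwarz[OF assms] by (simp add: abs_divide)
qed

lemma within_angle_iff: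
  assumes "\<forall>u\<in>L2p. P u \<in> L2"
  shows "within_angle \<alpha> P \<longleftrightarrow> (\<forall>x\<in>angle_cosines P. cos \<alpha> \<le> x)"
proof -
  have "cos \<alpha> * l2norm u * l2norm (P u) \<le> l2inner u (P u) \<longleftrightarrow>
      cos \<alpha> \<le> l2inner u (P u) / (l2norm u * l2norm (P u))"
    if "l2norm u \<noteq> 0" "l2norm (P u) \<noteq> 0" for u
    using that l2norm_nonneg[of u] l2norm_nonneg[of "P u"]
    by (simp add: pos_le_divide_eq mult.assoc)
  moreover have "cos \<alpha> * l2norm u * l2norm (P u) \<le> l2inner u (P u)"
    if "u \<in> L2p" "l2norm u = 0 \<or> l2norm (P u) = 0" for u
    using that assms l2inner_Cauchy_Schwarz[of u "P u"] by (auto simp: L2p_imp_L2)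
  ultimately show ?thesis
    by (auto simp: within_angle_def angle_cosines_def)
qed

lemma angle_cosines_bounds:
  assumes "\<forall>u\<in>L2p. P u \<in> L2" and "x \<in> angle_cosines P"
  shows "-1 \<le> x" "x \<le> 1"
proof -
  obtain u where "u \<in> L2p" and x: "x = l2inner u (P u) / (l2norm u * l2norm (P u))"
    using assms(2) by (auto simp: angle_cosines_def)
  then have "\<bar>x\<bar> \<le> 1"
    unfolding x using assms(1) by (intro abs_l2_cosine_le_one) (simp_all add: L2p_imp_L2)
  then show "-1 \<le> x" "x \<le> 1" by simp_all
qed

lemma Inf_angle_cosines_bounds:
  assumes "\<forall>u\<in>L2p. P u \<in> L2" and "angle_cosines P \<noteq> {}"
  shows "bdd_below (angle_cosines P)" "-1 \<le> Inf (angle_cosines P)" "Inf (angle_cosines P) \<le> 1"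
proof -
  show bdd: "bdd_below (angle_cosines P)"
    using angle_cosines_bounds[OF assms(1)] by (intro bdd_belowI[of _ "-1"]) auto
  show "-1 \<le> Inf (angle_cosines P)"
    using assms angle_cosines_bounds by (intro cInf_greatest) auto
  obtain x where "x \<in> angle_cosines P"
    using assms(2) by blast
  then show "Inf (angle_cosines P) \<le> 1"
    using angle_cosines_bounds[OF assms(1)] cInf_lower[OF _ bdd] by (meson order_trans)
qed

lemma within_angle_degenerate:
  assumes "\<forall>u\<in>L2p. P u \<in> L2" and "angle_cosines P = {}"
  shows "within_angle \<alpha> P"
  using assms by (simp add: within_angle_iff)

lemma within_singular_angle:
  assumes "\<forall>u\<in>L2p. P u \<in> L2" and "angle_cosines P \<noteq> {}"
  shows "within_angle (singular_angle P) P" "0 \<le> singular_angle P" "singular_angle P \<le> pi"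
  using Inf_angle_cosines_bounds[OF assms] cInf_lower[OF _ Inf_angle_cosines_bounds(1)[OF assms]]
  by (simp_all add: singular_angle_eq arccos_lbound arccos_ubound within_angle_iff[OF assms(1)])

lemma singular_angle_le:
  assumes "\<forall>u\<in>L2p. P u \<in> L2" and "angle_cosines P \<noteq> {}"
    and "within_angle \<alpha> P" and "0 \<le> \<alpha>" "\<alpha> \<le> pi"
  shows "singular_angle P \<le> \<alpha>"
proof -
  have "cos \<alpha> \<le> Inf (angle_cosines P)"
    using assms within_angle_iff by (intro cInf_greatest) auto
  then have "arccos (Inf (angle_cosines P)) \<le> arccos (cos \<alpha>)"
    using Inf_angle_cosines_bounds[OF assms(1,2)] by (intro arccos_le_arccos) auto
  with assms show ?thesis
    by (simp add: singular_angle_eq arccos_cos)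
qed

section \<open>The closed loop\<close>

lemma well_posed_inj:
  assumes "well_posed P C" "p \<in> L2ep \<times> L2ep" "q \<in> L2ep \<times> L2ep" "fb_map P C p = fb_map P C q"
  shows "p = q"
proof -
  obtain H where H: "\<forall>u \<in> L2ep \<times> L2ep. H (fb_map P C u) = u"
    using assms(1) unfolding well_posed_def by (elim exE conjE) (rule that)
  have "p = H (fb_map P C p)" using bspec[OF H assms(2)] by (rule sym)
  also have "\<dots> = q" unfolding assms(4) using bspec[OF H assms(3)] .
  finally show ?thesis .
qed

lemma well_posed_surj:
  assumes "well_posed P C" "e \<in> L2ep \<times> L2ep"
  obtains p where "p \<in> L2ep \<times> L2ep" "fb_map P C p = e"
proof -
  obtain H where H: "\<forall>e \<in> L2ep \<times> L2ep. H e \<in> L2ep \<times> L2ep \<and> fb_map P C (H e) = e"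
    using assms(1) unfolding well_posed_def by (elim exE conjE) (rule that)
  show thesis
    using bspec[OF H assms(2)] by (intro that) auto
qed

lemma loop_sol_eqI:
  assumes "well_posed P C" "p \<in> L2ep \<times> L2ep" "fb_map P C p = (e1, \<lambda>t. 0)"
  shows "loop_sol P C e1 = p"
  unfolding loop_sol_def
proof (rule the_equality)
  show "p \<in> L2ep \<times> L2ep \<and> fb_map P C p = (e1, \<lambda>t. 0)"
    using assms(2,3) ..
  show "q = p" if "q \<in> L2ep \<times> L2ep \<and> fb_map P C q = (e1, \<lambda>t. 0)" for q
    using well_posed_inj[OF assms(1)] that assms(2,3) by simp
qed

lemma loop_sol_exists:
  assumes "well_posed P C" "e1 \<in> L2ep"
  shows "loop_sol P C e1 \<in> L2ep \<times> L2ep" "fb_map P C (loop_sol P C e1) = (e1, \<lambda>t. 0)"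
proof -
  obtain p where p: "p \<in> L2ep \<times> L2ep" "fb_map P C p = (e1, \<lambda>t. 0)"
    by (rule well_posed_surj[OF assms(1) SigmaI[OF assms(2) zero_L2ep]])
  then show "loop_sol P C e1 \<in> L2ep \<times> L2ep" "fb_map P C (loop_sol P C e1) = (e1, \<lambda>t. 0)"
    by (simp_all add: loop_sol_eqI[OF assms(1) p])
qed

lemma loop_sol_L2p:
  assumes wp: "well_posed P C" and ls: "loop_stable P C" and e: "e \<in> L2p"
  obtains u c where "loop_sol P C e = (u, P u)" "e = (\<lambda>t. u t + C (P u) t)"
    "u \<in> L2p" "P u \<in> L2p" "l2norm (P u) \<le> c * l2norm e"
proof -
  obtain u y where sol: "loop_sol P C e = (u, y)"
    by (cases "loop_sol P C e")
  have "u \<in> L2ep" "y \<in> L2ep" "fb_map P C (u, y) = (e, \<lambda>t. 0)"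
    using loop_sol_exists[OF wp L2p_imp_L2ep[OF e]] by (simp_all add: sol)
  then have e_eq: "e = (\<lambda>t. u t + C y t)" and "(\<lambda>t. y t - P u t) = (\<lambda>t. 0)"
    by (simp_all add: fb_map_def)
  then have y: "y = P u"
    by (simp add: fun_eq_iff)
  obtain c where "c > 0" and stable_loop: "\<forall>T\<ge>0. \<forall>e1\<in>L2ep.
      sqrt ((l2norm (trunc T (fst (loop_sol P C e1))))\<^sup>2 + (l2norm (trunc T (snd (loop_sol P C e1))))\<^sup>2)
        \<le> c * l2norm (trunc T e1)"
    using ls by (auto simp: loop_stable_def)
  have "l2norm (trunc T u) \<le> c * l2norm e" "l2norm (trunc T y) \<le> c * l2norm e" if "T \<ge> 0" for T
  proof -
    have "sqrt ((l2norm (trunc T u))\<^sup>2 + (l2norm (trunc T y))\<^sup>2) \<le> c * l2norm (trunc T e)"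
      using stable_loop[rule_format, OF that L2p_imp_L2ep[OF e]] by (simp add: sol)
    also have "\<dots> \<le> c * l2norm e"
      using \<open>c > 0\<close> l2norm_trunc_le[OF L2p_imp_L2[OF e]] by (intro mult_left_mono) auto
    finally show "l2norm (trunc T u) \<le> c * l2norm e" "l2norm (trunc T y) \<le> c * l2norm e"
      using real_sqrt_sum_squares_ge1[of "l2norm (trunc T u)" "l2norm (trunc T y)"]
        real_sqrt_sum_squares_ge2[of "l2norm (trunc T y)" "l2norm (trunc T u)"] by linarith+
  qed
  then have "u \<in> L2p" "y \<in> L2p" "l2norm y \<le> c * l2norm e"
    using L2p_if_bounded_truncations[OF \<open>u \<in> L2ep\<close>] L2p_if_bounded_truncations[OF \<open>y \<in> L2ep\<close>]
    by blast+
  then show thesis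
    using that[of u c] sol e_eq by (simp add: y)
qed

lemma closed_loop_L2p:
  assumes "well_posed P C" "loop_stable P C" "e \<in> L2p"
  shows "closed_loop P C e \<in> L2p"
  by (rule loop_sol_L2p[OF assms]) (simp add: closed_loop_def)

lemma closed_loop_angle_cosines_nonempty:
  assumes P: "\<forall>u\<in>L2p. P u \<in> L2p" and C: "\<forall>u\<in>L2p. C u \<in> L2p"
    and wp: "well_posed P C" and ls: "loop_stable P C"
    and "angle_cosines P \<noteq> {}"
  shows "angle_cosines (closed_loop P C) \<noteq> {}"
proof -
  obtain w where w: "w \<in> L2p" "l2norm w \<noteq> 0" "l2norm (P w) \<noteq> 0"
    using assms(5) by (auto simp: angle_cosines_eq_empty_iff)
  define e where "e = (\<lambda>t. w t + C (P w) t)"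
  have "e \<in> L2p"
    unfolding e_def using w P C by (intro L2p_add) auto
  have "loop_sol P C e = (w, P w)"
    using w P by (intro loop_sol_eqI[OF wp]) (auto simp: e_def fb_map_def L2p_imp_L2ep)
  moreover obtain u c where "loop_sol P C e = (u, P u)" "l2norm (P u) \<le> c * l2norm e"
    by (rule loop_sol_L2p[OF wp ls \<open>e \<in> L2p\<close>])
  ultimately have "closed_loop P C e = P w" "l2norm (P w) \<le> c * l2norm e"
    by (simp_all add: closed_loop_def)
  then have "l2norm e \<noteq> 0"
    using w(3) l2norm_nonneg[of "P w"] by auto
  with \<open>e \<in> L2p\<close> \<open>closed_loop P C e = P w\<close> w(3) show ?thesis
    by (auto simp: angle_cosines_eq_empty_iff)
qed

lemma closed_loop_angle_cosines_empty:
  assumes C: "\<forall>u\<in>L2p. C u \<in> L2p" and wp: "well_posed P C" and ls: "loop_stable P C"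
    and "angle_cosines P = {}" "angle_cosines C = {}"
  shows "angle_cosines (closed_loop P C) = {}"
proof -
  have "l2norm (closed_loop P C e) = 0" if e: "e \<in> L2p" "l2norm e \<noteq> 0" for e
  proof -
    obtain u c where sol: "loop_sol P C e = (u, P u)" "e = (\<lambda>t. u t + C (P u) t)"
      and L2p: "u \<in> L2p" "P u \<in> L2p"
      by (rule loop_sol_L2p[OF wp ls e(1)])
    have "l2norm (P u) = 0"
    proof (rule ccontr)
      assume "l2norm (P u) \<noteq> 0"
      with assms(4,5) L2p have "l2norm u = 0" "l2norm (C (P u)) = 0"
        by (auto simp: angle_cosines_eq_empty_iff)
      then have "l2norm e \<le> 0"
        using sol(2) l2norm_triangle[of u "C (P u)"] L2p C by (auto simp: L2p_imp_L2)
      with e(2) show False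
        using l2norm_nonneg[of e] by simp
    qed
    with sol(1) show ?thesis
      by (simp add: closed_loop_def)
  qed
  then show ?thesis
    by (auto simp: angle_cosines_eq_empty_iff)
qed

lemma closed_loop_within_angle:
  assumes C: "\<forall>u\<in>L2p. C u \<in> L2p" and wp: "well_posed P C" and ls: "loop_stable P C"
    and "within_angle \<alpha> P" "within_angle \<beta> C"
    and "0 \<le> \<alpha>" "0 \<le> \<beta>" "\<alpha> + \<beta> \<le> pi"
  shows "within_angle (max \<alpha> \<beta>) (closed_loop P C)"
  unfolding within_angle_def
proof
  fix e :: "'a signal"
  assume "e \<in> L2p"
  then obtain u c where sol: "loop_sol P C e = (u, P u)" "e = (\<lambda>t. u t + C (P u) t)"
    and L2p: "u \<in> L2p" "P u \<in> L2p"
    by (rule loop_sol_L2p[OF wp ls])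
  have P_angle: "cos \<alpha> * l2norm u * l2norm (P u) \<le> l2inner u (P u)"
    using assms(4) L2p(1) unfolding within_angle_def by blast
  have "cos \<beta> * l2norm (P u) * l2norm (C (P u)) \<le> l2inner (P u) (C (P u))"
    using assms(5) L2p(2) unfolding within_angle_def by blast
  then have C_angle: "cos \<beta> * l2norm (C (P u)) * l2norm (P u) \<le> l2inner (C (P u)) (P u)"
    by (simp add: l2inner_commute mult_ac)
  have "cos (max \<alpha> \<beta>) * l2norm (\<lambda>t. u t + C (P u) t) * l2norm (P u)
      \<le> l2inner (\<lambda>t. u t + C (P u) t) (P u)"
    using assms(6-8) L2p C P_angle C_angle by (intro l2inner_add_ge_sector) (auto simp: L2p_imp_L2)
  moreover have "closed_loop P C e = P u"
    using sol(1) by (simp add: closed_loop_def)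
  ultimately show "cos (max \<alpha> \<beta>) * l2norm e * l2norm (closed_loop P C e) \<le> l2inner e (closed_loop P C e)"
    using sol(2) by simp
qed

lemma closed_loop_singular_angle_le:
  assumes C: "\<forall>u\<in>L2p. C u \<in> L2p" and wp: "well_posed P C" and ls: "loop_stable P C"
    and "angle_cosines (closed_loop P C) \<noteq> {}"
    and "within_angle \<alpha> P" "within_angle \<beta> C" "0 \<le> \<alpha>" "0 \<le> \<beta>" "\<alpha> + \<beta> \<le> pi"
  shows "singular_angle (closed_loop P C) \<le> max \<alpha> \<beta>"
proof (rule singular_angle_le[OF _ assms(4)])
  show "\<forall>e\<in>L2p. closed_loop P C e \<in> L2"
    using closed_loop_L2p[OF wp ls] by (simp add: L2p_imp_L2)
  show "within_angle (max \<alpha> \<beta>) (closed_loop P C)"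
    by (rule closed_loop_within_angle[OF C wp ls assms(5-9)])
qed (use assms(7-9) in auto)

theorem proposition7:
  fixes P C :: "'n::finite sys"
  assumes "is_system P" and "is_system C"
    and "stable P" and "stable C"
    and "well_posed P C"
    and "loop_stable P C"
    and "singular_angle P + singular_angle C \<le> pi"
  shows "singular_angle (closed_loop P C) \<le> max (singular_angle P) (singular_angle C)"
proof -
  let ?G = "closed_loop P C"
  have P: "\<forall>u\<in>L2p. P u \<in> L2p" and C: "\<forall>u\<in>L2p. C u \<in> L2p"
    using assms(3,4) by (simp_all add: stable_def)
  then have P_L2: "\<forall>u\<in>L2p. P u \<in> L2" and C_L2: "\<forall>u\<in>L2p. C u \<in> L2"
    by (simp_all add: L2p_imp_L2)
  show ?thesis
  proof (cases "angle_cosines ?G = {}")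
    case True
    then have "angle_cosines P = {}"
      using closed_loop_angle_cosines_nonempty[OF P C assms(5,6)] by blast
    with True show ?thesis
      by (simp add: singular_angle_eq) \<comment> \<open>both sides are arccos (Inf {})\<close>
  next
    case False
    note G_le = closed_loop_singular_angle_le[OF C assms(5,6) False]
    consider "angle_cosines P \<noteq> {}" "angle_cosines C \<noteq> {}"
      | "angle_cosines P = {}" "angle_cosines C \<noteq> {}"
      | "angle_cosines P \<noteq> {}" "angle_cosines C = {}"
      using closed_loop_angle_cosines_empty[OF C assms(5,6)] False by blast
    then show ?thesis
    proof cases
      case 1
      then show ?thesis
        using within_singular_angle[OF P_L2] within_singular_angle[OF C_L2] assms(7)
        by (intro G_le) auto
    next
      case 2
      then show ?thesis
        using G_le[of 0 "singular_angle C"] within_singular_angle[OF C_L2]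
          within_angle_degenerate[OF P_L2] by (auto simp: le_max_iff_disj)
    next
      case 3
      then show ?thesis
        using G_le[of "singular_angle P" 0] within_singular_angle[OF P_L2]
          within_angle_degenerate[OF C_L2] by (auto simp: le_max_iff_disj)
    qed
  qed
qed

end
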